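(* Consider the ride-hailing model in the context, and let $\hat{\bm x}^A$ be an AV-first strategy, with residual demand $\hat b^C_i=b_i-\sum_j\hat x^A_{ji}$. The AV-first policy is optimal, i.e. $\sum_{i,\alpha}r^A_{i\alpha}\hat x^A_{i\alpha}+\pi(\hat{\bm b}^C)$ equals the optimal value of $\mathcal{OPT}$, if either: (i) the residual demand is fully served by CVs in the CV equilibrium, i.e. an optimal solution $\hat{\bm x}^C$ of $\mathcal{CV}(\hat{\bm b}^C)$ satisfies $\sum_j\hat x^C_{ji}=\hat b^C_i$ for all $i$; or (ii) there exists $\bm x^A\in\mathbb R^{L\times L}_{\ge0}$ satisfying flow balance and $\sum_{i,\alpha}\tau^{dr}_{i\alpha}x^A_{i\alpha}\le M$ with $\sum_j x^A_{ji}=b_i$ for all $i$.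
   Context: Model. There are $L$ regions $\{1,\dots,L\}$. For regions $i,j$, $b_{ij}\ge0$ is the customer rate from $i$ to $j$; $b_i=\sum_j b_{ij}$ (assumed $>0$), $q_{ij}=b_{ij}/b_i$. Travel times satisfy $t_{ij}>0$ for $i\ne j$, $t_{ii}=0$. Constants: $p>0$, $c\ge0$, $R\in(0,1)$, CV fleet mass $N>0$, AV fleet mass $M\ge0$. For $i,\alpha$: $\tau^{dr}_{i\alpha}=t_{i\alpha}+\sum_j q_{\alpha j}t_{\alpha j}$, $r^A_{i\alpha}=p\sum_j q_{\alpha j}t_{\alpha j}-c\tau^{dr}_{i\alpha}$, $r^C_{i\alpha}=p(1-R)\sum_j q_{\alpha j}t_{\alpha j}-c\tau^{dr}_{i\alpha}$, $r^{C2P}_{i\alpha}=pR\sum_j q_{\alpha j}t_{\alpha j}$. A matrix $\bm x\in\mathbb R^{L\times L}_{\ge0}$ satisfies flow balance if $\sum_j(\sum_k x_{kj})q_{ji}=\sum_\alpha x_{i\alpha}$ for all $i$. $\mathcal{CV}(\bm b^C)$: maximize $N\log\sum_{i,\alpha}r^C_{i\alpha}x_{i\alpha}-\sum_{i,\alpha}\tau^{dr}_{i\alpha}x_{i\alpha}$ over $\bm x\ge0$ satisfying flow balance and $\sum_j x_{ji}\le b^C_i$ for all $i$; $\pi(\bm b^C)=\sum_{i,\alpha}r^{C2P}_{i\alpha}x_{i\alpha}$ for an optimal solution $\bm x$ (same for all optimal solutions). $\mathcal{OPT}$: maximize $\sum_{i,\alpha}r^A_{i\alpha}x^A_{i\alpha}+\pi(\bm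 b^C)$ over $\bm b^C\in\mathbb R^L_{\ge0}$, $\bm x^A\in\mathbb R^{L\times L}_{\ge0}$ subject to $\sum_j x^A_{ji}+b^C_i\le b_i$ for all $i$, flow balance for $\bm x^A$, and $\sum_{i,\alpha}\tau^{dr}_{i\alpha}x^A_{i\alpha}\le M$. AV-first policy: an AV-first strategy $\hat{\bm x}^A$ is an optimal solution of $\mathcal{OPT}$ with $\bm b^C$ fixed to $\bm 0$, i.e. it maximizes $\sum_{i,\alpha}r^A_{i\alpha}x^A_{i\alpha}$ over $\bm x^A\ge0$ with $\sum_j x^A_{ji}\le b_i$ for all $i$, flow balance, and $\sum_{i,\alpha}\tau^{dr}_{i\alpha}x^A_{i\alpha}\le M$; the remaining demand $\hat{\bm b}^C$ is then revealed to CVs, giving platform profit $\sum_{i,\alpha}r^A_{i\alpha}\hat x^A_{i\alpha}+\pi(\hat{\bm b}^C)$. *)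

theory Defs
  imports Complex_Main
begin

text \<open>Ride-hailing model. Regions form a finite type 'l; matrices are functions 'l => 'l => real.
  Parameters: b (customer rates), t (travel times), p, c, R, N, M.\<close>

definition q :: "('l::finite \<Rightarrow> 'l \<Rightarrow> real) \<Rightarrow> 'l \<Rightarrow> 'l \<Rightarrow> real" where
  "q b i j = b i j / (\<Sum>k\<in>UNIV. b i k)"

definition avg_len :: "('l::finite \<Rightarrow> 'l \<Rightarrow> real) \<Rightarrow> ('l \<Rightarrow> 'l \<Rightarrow> real) \<Rightarrow> 'l \<Rightarrow> real" where
  "avg_len b t \<alpha> = (\<Sum>j\<in>UNIV. q b \<alpha> j * t \<alpha> j)"

definition tau_dr :: "('l::finite \<Rightarrow> 'l \<Rightarrow> real) \<Rightarrow> ('l \<Rightarrow> 'l \<Rightarrow> real) \<Rightarrow> 'l \<Rightarrow> 'l \<Rightarrow> real" where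
  "tau_dr b t i \<alpha> = t i \<alpha> + avg_len b t \<alpha>"

definition rA :: "real \<Rightarrow> real \<Rightarrow> ('l::finite \<Rightarrow> 'l \<Rightarrow> real) \<Rightarrow> ('l \<Rightarrow> 'l \<Rightarrow> real) \<Rightarrow> 'l \<Rightarrow> 'l \<Rightarrow> real" where
  "rA p c b t i \<alpha> = p * avg_len b t \<alpha> - c * tau_dr b t i \<alpha>"

definition rC :: "real \<Rightarrow> real \<Rightarrow> real \<Rightarrow> ('l::finite \<Rightarrow> 'l \<Rightarrow> real) \<Rightarrow> ('l \<Rightarrow> 'l \<Rightarrow> real) \<Rightarrow> 'l \<Rightarrow> 'l \<Rightarrow> real" where
  "rC p c R b t i \<alpha> = p * (1 - R) * avg_len b t \<alpha> - c * tau_dr b t i \<alpha>"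

definition rC2P :: "real \<Rightarrow> real \<Rightarrow> ('l::finite \<Rightarrow> 'l \<Rightarrow> real) \<Rightarrow> ('l \<Rightarrow> 'l \<Rightarrow> real) \<Rightarrow> 'l \<Rightarrow> 'l \<Rightarrow> real" where
  "rC2P p R b t i \<alpha> = p * R * avg_len b t \<alpha>"

definition wsum :: "('l::finite \<Rightarrow> 'l \<Rightarrow> real) \<Rightarrow> ('l \<Rightarrow> 'l \<Rightarrow> real) \<Rightarrow> real" where
  "wsum f x = (\<Sum>i\<in>UNIV. \<Sum>\<alpha>\<in>UNIV. f i \<alpha> * x i \<alpha>)"

definition inflow :: "('l::finite \<Rightarrow> 'l \<Rightarrow> real) \<Rightarrow> 'l \<Rightarrow> real" where
  "inflow x i = (\<Sum>j\<in>UNIV. x j i)"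

definition nonneg :: "('l \<Rightarrow> 'l \<Rightarrow> real) \<Rightarrow> bool" where
  "nonneg x \<longleftrightarrow> (\<forall>i j. 0 \<le> x i j)"

definition flow_balance :: "('l::finite \<Rightarrow> 'l \<Rightarrow> real) \<Rightarrow> ('l \<Rightarrow> 'l \<Rightarrow> real) \<Rightarrow> bool" where
  "flow_balance b x \<longleftrightarrow> (\<forall>i. (\<Sum>j\<in>UNIV. (\<Sum>k\<in>UNIV. x k j) * q b j i) = (\<Sum>\<alpha>\<in>UNIV. x i \<alpha>))"

text \<open>CV problem CV(bC). The objective N log(revenue) - driving time is only defined where the
  revenue is positive (domain of log), so admissible points must have positive revenue.\<close>
definition CV_feasible :: "('l::finite \<Rightarrow> 'l \<Rightarrow> real) \<Rightarrow> ('l \<Rightarrow> real) \<Rightarrow> ('l \<Rightarrow> 'l \<Rightarrow> real) \<Rightarrow> bool" where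
  "CV_feasible b bC x \<longleftrightarrow> nonneg x \<and> flow_balance b x \<and> (\<forall>i. inflow x i \<le> bC i)"

definition CV_obj :: "real \<Rightarrow> real \<Rightarrow> real \<Rightarrow> real \<Rightarrow> ('l::finite \<Rightarrow> 'l \<Rightarrow> real) \<Rightarrow> ('l \<Rightarrow> 'l \<Rightarrow> real)
    \<Rightarrow> ('l \<Rightarrow> 'l \<Rightarrow> real) \<Rightarrow> real" where
  "CV_obj p c R N b t x = N * ln (wsum (rC p c R b t) x) - wsum (tau_dr b t) x"

definition CV_optimal :: "real \<Rightarrow> real \<Rightarrow> real \<Rightarrow> real \<Rightarrow> ('l::finite \<Rightarrow> 'l \<Rightarrow> real) \<Rightarrow> ('l \<Rightarrow> 'l \<Rightarrow> real)
    \<Rightarrow> ('l \<Rightarrow> real) \<Rightarrow> ('l \<Rightarrow> 'l \<Rightarrow> real) \<Rightarrow> bool" where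
  "CV_optimal p c R N b t bC x \<longleftrightarrow>
     CV_feasible b bC x \<and> 0 < wsum (rC p c R b t) x \<and>
     (\<forall>y. CV_feasible b bC y \<and> 0 < wsum (rC p c R b t) y \<longrightarrow>
          CV_obj p c R N b t y \<le> CV_obj p c R N b t x)"

text \<open>Platform profit from CVs: the C2P revenue at an optimal solution of CV(bC);
  convention 0 if CV(bC) has no optimal solution (no profitable CV service).\<close>
definition pi_CV :: "real \<Rightarrow> real \<Rightarrow> real \<Rightarrow> real \<Rightarrow> ('l::finite \<Rightarrow> 'l \<Rightarrow> real) \<Rightarrow> ('l \<Rightarrow> 'l \<Rightarrow> real)
    \<Rightarrow> ('l \<Rightarrow> real) \<Rightarrow> real" where
  "pi_CV p c R N b t bC =
     (if \<exists>x. CV_optimal p c R N b t bC x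
      then wsum (rC2P p R b t) (SOME x. CV_optimal p c R N b t bC x) else 0)"

definition OPT_feasible :: "real \<Rightarrow> ('l::finite \<Rightarrow> 'l \<Rightarrow> real) \<Rightarrow> ('l \<Rightarrow> 'l \<Rightarrow> real)
    \<Rightarrow> ('l \<Rightarrow> real) \<Rightarrow> ('l \<Rightarrow> 'l \<Rightarrow> real) \<Rightarrow> bool" where
  "OPT_feasible M b t bC xA \<longleftrightarrow>
     (\<forall>i. 0 \<le> bC i) \<and> nonneg xA \<and> (\<forall>i. inflow xA i + bC i \<le> (\<Sum>j\<in>UNIV. b i j)) \<and>
     flow_balance b xA \<and> wsum (tau_dr b t) xA \<le> M"

definition OPT_obj :: "real \<Rightarrow> real \<Rightarrow> real \<Rightarrow> real \<Rightarrow> ('l::finite \<Rightarrow> 'l \<Rightarrow> real) \<Rightarrow> ('l \<Rightarrow> 'l \<Rightarrow> real)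
    \<Rightarrow> ('l \<Rightarrow> real) \<Rightarrow> ('l \<Rightarrow> 'l \<Rightarrow> real) \<Rightarrow> real" where
  "OPT_obj p c R N b t bC xA = wsum (rA p c b t) xA + pi_CV p c R N b t bC"

definition AV_first :: "real \<Rightarrow> real \<Rightarrow> real \<Rightarrow> ('l::finite \<Rightarrow> 'l \<Rightarrow> real) \<Rightarrow> ('l \<Rightarrow> 'l \<Rightarrow> real)
    \<Rightarrow> ('l \<Rightarrow> 'l \<Rightarrow> real) \<Rightarrow> bool" where
  "AV_first p c M b t xA \<longleftrightarrow>
     OPT_feasible M b t (\<lambda>_. 0) xA \<and>
     (\<forall>y. OPT_feasible M b t (\<lambda>_. 0) y \<longrightarrow> wsum (rA p c b t) y \<le> wsum (rA p c b t) xA)"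

end

theory Submission
  imports Defs
begin

text \<open>All revenues are linear in two quantities of a flow: its trip time \<open>A\<close> (the expected
  passenger time of its pick-ups) and its driving time \<open>T\<close>. The AV revenue is \<open>g = p A - c T\<close>,
  the CV revenue \<open>f = p (1 - R) A - c T\<close>, and the commission \<open>g - f = p R A\<close>; it is well defined
  because strict concavity of \<open>ln\<close> makes the revenue, hence \<open>A\<close>, of the CV equilibrium unique.

  (i) If the CVs serve the whole residual demand, the commission is \<open>p R\<close> times the trip time of
  that demand, which bounds the commission of any other split; so it suffices that the AV-first
  flow also maximizes \<open>f\<close> over budget-feasible AV flows. A flow driving more loses on both terms.
  For a flow \<open>y\<close> driving less, the point of the chord from \<open>y\<close> to the AV-first flow plus the CV
  equilibrium with the AV-first driving time is budget-feasible, so it does not beat the AV-first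
  flow on \<open>g\<close>; this bounds the extra trip time of \<open>y\<close> per unit of saved driving time by that of
  the CV equilibrium, at which driving is profitable at the CV rate.

  (ii) If AVs can cover all demand within the budget, the AV-first flow maximizes \<open>g\<close> even
  without the budget, and a CV flow earns the platform less commission than the same flow driven
  by AVs would earn.\<close>

definition demand :: "('l::finite \<Rightarrow> 'l \<Rightarrow> real) \<Rightarrow> 'l \<Rightarrow> real" where
  "demand b i = (\<Sum>j\<in>UNIV. b i j)"

definition trip_time :: "('l::finite \<Rightarrow> 'l \<Rightarrow> real) \<Rightarrow> ('l \<Rightarrow> 'l \<Rightarrow> real) \<Rightarrow> ('l \<Rightarrow> real) \<Rightarrow> real" where
  "trip_time b t v = (\<Sum>\<alpha>\<in>UNIV. avg_len b t \<alpha> * v \<alpha>)"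

lemma wsum_lincomb:
  "wsum f (\<lambda>i j. a * x i j + d * y i j) = a * wsum f x + d * wsum f y"
  unfolding wsum_def by (simp add: algebra_simps sum.distrib sum_distrib_left)

lemma inflow_lincomb:
  "inflow (\<lambda>i j. a * x i j + d * y i j) k = a * inflow x k + d * inflow y k"
  unfolding inflow_def by (simp add: algebra_simps sum.distrib sum_distrib_left)

lemma inflow_nonneg: "nonneg x \<Longrightarrow> 0 \<le> inflow x i"
  unfolding inflow_def nonneg_def by (simp add: sum_nonneg)

lemma CV_feasible_lincomb:
  assumes "CV_feasible b u x" "CV_feasible b v y" "0 \<le> a" "0 \<le> d"
  shows "CV_feasible b (\<lambda>i. a * u i + d * v i) (\<lambda>i j. a * x i j + d * y i j)"
proof -
  have "nonneg (\<lambda>i j. a * x i j + d * y i j)"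
    using assms unfolding CV_feasible_def nonneg_def by simp
  moreover have "flow_balance b (\<lambda>i j. a * x i j + d * y i j)"
    using assms unfolding CV_feasible_def flow_balance_def
    by (simp add: algebra_simps sum.distrib flip: sum_distrib_left)
  moreover have "inflow (\<lambda>i j. a * x i j + d * y i j) i \<le> a * u i + d * v i" for i
    using assms unfolding CV_feasible_def inflow_lincomb
    by (simp add: add_mono mult_left_mono)
  ultimately show ?thesis by (simp add: CV_feasible_def)
qed

lemma trip_time_diff: "trip_time b t (\<lambda>\<alpha>. u \<alpha> - v \<alpha>) = trip_time b t u - trip_time b t v"
  unfolding trip_time_def by (simp add: right_diff_distrib sum_subtractf)

lemma CV_feasible_own_inflow: "nonneg x \<Longrightarrow> flow_balance b x \<Longrightarrow> CV_feasible b (inflow x) x"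
  by (simp add: CV_feasible_def)

lemma wsum_destination_weight:
  "wsum (\<lambda>i \<alpha>. k * g \<alpha> + d * h i \<alpha>) x = k * (\<Sum>\<alpha>\<in>UNIV. g \<alpha> * inflow x \<alpha>) + d * wsum h x"
proof -
  have "wsum (\<lambda>i \<alpha>. k * g \<alpha> + d * h i \<alpha>) x
      = k * (\<Sum>i\<in>UNIV. \<Sum>\<alpha>\<in>UNIV. g \<alpha> * x i \<alpha>) + d * wsum h x"
    unfolding wsum_def by (simp add: algebra_simps sum.distrib sum_distrib_left)
  also have "(\<Sum>i\<in>UNIV. \<Sum>\<alpha>\<in>UNIV. g \<alpha> * x i \<alpha>) = (\<Sum>\<alpha>\<in>UNIV. g \<alpha> * inflow x \<alpha>)"
    unfolding inflow_def by (subst sum.swap) (simp add: sum_distrib_left)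
  finally show ?thesis .
qed

lemma wsum_rA: "wsum (rA p c b t) x = p * trip_time b t (inflow x) - c * wsum (tau_dr b t) x"
proof -
  have components: "rA p c b t = (\<lambda>i \<alpha>. p * avg_len b t \<alpha> + (-c) * tau_dr b t i \<alpha>)"
    by (simp add: rA_def fun_eq_iff)
  show ?thesis unfolding components wsum_destination_weight trip_time_def by simp
qed

lemma wsum_rC:
  "wsum (rC p c R b t) x = p * (1 - R) * trip_time b t (inflow x) - c * wsum (tau_dr b t) x"
proof -
  have components: "rC p c R b t = (\<lambda>i \<alpha>. (p * (1 - R)) * avg_len b t \<alpha> + (-c) * tau_dr b t i \<alpha>)"
    by (simp add: rC_def fun_eq_iff)
  show ?thesis unfolding components wsum_destination_weight trip_time_def by simp
qed

lemma wsum_rC2P: "wsum (rC2P p R b t) x = p * R * trip_time b t (inflow x)"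
proof -
  have components: "rC2P p R b t = (\<lambda>i \<alpha>. (p * R) * avg_len b t \<alpha> + 0 * tau_dr b t i \<alpha>)"
    by (simp add: rC2P_def fun_eq_iff)
  show ?thesis unfolding components wsum_destination_weight trip_time_def by simp
qed

lemma wsum_tau_dr: "wsum (tau_dr b t) x = trip_time b t (inflow x) + wsum t x"
proof -
  have components: "tau_dr b t = (\<lambda>i \<alpha>. 1 * avg_len b t \<alpha> + 1 * t i \<alpha>)"
    by (simp add: tau_dr_def fun_eq_iff)
  show ?thesis unfolding components wsum_destination_weight trip_time_def by simp
qed

lemma wsum_rA_eq_rC_plus_rC2P:
  "wsum (rA p c b t) x = wsum (rC p c R b t) x + wsum (rC2P p R b t) x"
  unfolding wsum_rA wsum_rC wsum_rC2P by (simp add: algebra_simps)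

lemma ln_midpoint_gt:
  fixes u v :: real
  assumes "0 < u" "0 < v" "u \<noteq> v"
  shows "(ln u + ln v) / 2 < ln ((u + v) / 2)"
proof -
  have "0 < (u - v) ^ 2"
    using assms by simp
  then have "u * v < ((u + v) / 2) ^ 2"
    by (simp add: power2_eq_square field_simps)
  then have "ln (u * v) < ln (((u + v) / 2) ^ 2)"
    using assms by simp
  then show ?thesis
    using assms by (simp add: ln_mult ln_realpow)
qed

lemma CV_optimal_unique_values:
  assumes "0 < N"
    and x: "CV_optimal p c R N b t bC x" and y: "CV_optimal p c R N b t bC y"
  shows "wsum (rC p c R b t) x = wsum (rC p c R b t) y"
    and "wsum (tau_dr b t) x = wsum (tau_dr b t) y"
proof -
  let ?rev = "wsum (rC p c R b t)" and ?obj = "CV_obj p c R N b t"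
  define m where "m = (\<lambda>i j. (1/2) * x i j + (1/2) * y i j)"
  have feas: "CV_feasible b bC x" "CV_feasible b bC y"
    and rev_pos: "0 < ?rev x" "0 < ?rev y"
    using x y by (auto simp: CV_optimal_def)
  have same_obj: "?obj x = ?obj y"
    using x y by (auto simp: CV_optimal_def intro: order.antisym)
  have rev_m: "?rev m = (?rev x + ?rev y) / 2"
    unfolding m_def wsum_lincomb by simp
  have "CV_feasible b (\<lambda>i. (1/2) * bC i + (1/2) * bC i) m"
    unfolding m_def using feas by (intro CV_feasible_lincomb) auto
  then have "CV_feasible b bC m"
    by simp
  moreover have "0 < ?rev m"
    using rev_m rev_pos by simp
  ultimately have obj_m: "?obj m \<le> ?obj x"
    using x by (auto simp: CV_optimal_def)
  show rev_eq: "?rev x = ?rev y"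
  proof (rule ccontr)
    assume "?rev x \<noteq> ?rev y"
    then have "N * ((ln (?rev x) + ln (?rev y)) / 2) < N * ln (?rev m)"
      using ln_midpoint_gt[OF rev_pos] \<open>0 < N\<close> unfolding rev_m by simp
    then have "(?obj x + ?obj y) / 2 < ?obj m"
      unfolding CV_obj_def m_def wsum_lincomb by (simp add: field_simps)
    then show False
      using same_obj obj_m by simp
  qed
  show "wsum (tau_dr b t) x = wsum (tau_dr b t) y"
    using same_obj rev_eq unfolding CV_obj_def by simp
qed

lemma OPT_feasible_iff:
  "OPT_feasible M b t bC xA \<longleftrightarrow>
     (\<forall>i. 0 \<le> bC i) \<and> CV_feasible b (\<lambda>i. demand b i - bC i) xA \<and> wsum (tau_dr b t) xA \<le> M"
  unfolding OPT_feasible_def CV_feasible_def demand_def by (auto simp: le_diff_eq)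

lemma OPT_feasible_imp_demand_feasible:
  assumes "OPT_feasible M b t bC xA"
  shows "CV_feasible b (demand b) xA"
proof -
  have "inflow xA i \<le> demand b i" for i
  proof -
    have "0 \<le> bC i" "inflow xA i \<le> demand b i - bC i"
      using assms by (simp_all add: OPT_feasible_iff CV_feasible_def)
    then show ?thesis
      by linarith
  qed
  then show ?thesis
    using assms by (simp add: OPT_feasible_iff CV_feasible_def)
qed

lemma AV_first_iff:
  "AV_first p c M b t xh \<longleftrightarrow>
     CV_feasible b (demand b) xh \<and> wsum (tau_dr b t) xh \<le> M \<and>
     (\<forall>y. CV_feasible b (demand b) y \<and> wsum (tau_dr b t) y \<le> M \<longrightarrow>
          wsum (rA p c b t) y \<le> wsum (rA p c b t) xh)"
  unfolding AV_first_def OPT_feasible_iff by simp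

lemma AV_first_above_chord:
  assumes xh: "AV_first p c M b t xh"
    and y: "CV_feasible b (demand b) y" and w: "CV_feasible b (demand b) w"
    and le: "wsum (tau_dr b t) y \<le> wsum (tau_dr b t) xh" "wsum (tau_dr b t) xh \<le> wsum (tau_dr b t) w"
    and lt: "wsum (tau_dr b t) y < wsum (tau_dr b t) w"
  shows "(wsum (tau_dr b t) w - wsum (tau_dr b t) xh) * wsum (rA p c b t) y
           + (wsum (tau_dr b t) xh - wsum (tau_dr b t) y) * wsum (rA p c b t) w
         \<le> (wsum (tau_dr b t) w - wsum (tau_dr b t) y) * wsum (rA p c b t) xh"
proof -
  let ?T = "wsum (tau_dr b t)" and ?g = "wsum (rA p c b t)"
  define s where "s = (?T xh - ?T y) / (?T w - ?T y)"
  define z where "z = (\<lambda>i j. (1 - s) * y i j + s * w i j)"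
  have s: "0 \<le> s" "s \<le> 1"
    using le lt by (simp_all add: s_def)
  have "CV_feasible b (\<lambda>i. (1 - s) * demand b i + s * demand b i) z"
    unfolding z_def using y w s by (intro CV_feasible_lincomb) auto
  then have z_feasible: "CV_feasible b (demand b) z"
    by (simp add: algebra_simps)
  have "?T z = ?T y + s * (?T w - ?T y)"
    unfolding z_def wsum_lincomb by (simp add: algebra_simps)
  also have "\<dots> = ?T xh"
    using lt by (simp add: s_def)
  finally have "?g z \<le> ?g xh"
    using xh z_feasible by (simp add: AV_first_iff)
  then have "(?T w - ?T y) * ((1 - s) * ?g y + s * ?g w) \<le> (?T w - ?T y) * ?g xh"
    using lt unfolding z_def wsum_lincomb by (simp add: mult_left_mono)
  moreover have "(?T w - ?T y) * (1 - s) = ?T w - ?T xh" "(?T w - ?T y) * s = ?T xh - ?T y"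
    using lt by (simp_all add: s_def field_simps)
  ultimately show ?thesis
    by (simp add: distrib_left mult.assoc[symmetric])
qed

locale ride_hailing =
  fixes b t :: "'l::finite \<Rightarrow> 'l \<Rightarrow> real" and p c R N :: real
  assumes b_nonneg: "\<And>i j. 0 \<le> b i j" and t_nonneg: "\<And>i j. 0 \<le> t i j"
    and p_pos: "0 < p" and c_nonneg: "0 \<le> c" and R_nonneg: "0 \<le> R" and R_lt1: "R < 1"
    and N_pos: "0 < N"
begin

lemma avg_len_nonneg: "0 \<le> avg_len b t \<alpha>"
  unfolding avg_len_def q_def using b_nonneg t_nonneg
  by (intro sum_nonneg mult_nonneg_nonneg divide_nonneg_nonneg) auto

lemma trip_time_mono: "(\<And>\<alpha>. u \<alpha> \<le> v \<alpha>) \<Longrightarrow> trip_time b t u \<le> trip_time b t v"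
  unfolding trip_time_def using avg_len_nonneg by (intro sum_mono mult_left_mono) auto

lemma trip_time_nonneg: "(\<And>\<alpha>. 0 \<le> v \<alpha>) \<Longrightarrow> 0 \<le> trip_time b t v"
  using trip_time_mono[of "\<lambda>_. 0" v] by (simp add: trip_time_def)

lemma pi_CV_eq:
  assumes x: "CV_optimal p c R N b t bC x"
  shows "pi_CV p c R N b t bC = p * R * trip_time b t (inflow x)"
proof -
  define x' where "x' = (SOME x. CV_optimal p c R N b t bC x)"
  have x': "CV_optimal p c R N b t bC x'"
    unfolding x'_def by (fact someI[where P = "CV_optimal p c R N b t bC", OF x])
  have "p * (1 - R) * trip_time b t (inflow x') = p * (1 - R) * trip_time b t (inflow x)"
    using CV_optimal_unique_values[OF N_pos x' x] unfolding wsum_rC by simp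
  then have "trip_time b t (inflow x') = trip_time b t (inflow x)"
    using p_pos R_lt1 by simp
  then show ?thesis
    using x unfolding pi_CV_def x'_def[symmetric] wsum_rC2P by auto
qed

lemma pi_CV_nonneg: "0 \<le> pi_CV p c R N b t bC"
proof (cases "\<exists>x. CV_optimal p c R N b t bC x")
  case True
  then obtain x where x: "CV_optimal p c R N b t bC x" ..
  then have "nonneg x"
    by (simp add: CV_optimal_def CV_feasible_def)
  then have "0 \<le> trip_time b t (inflow x)"
    by (simp add: trip_time_nonneg inflow_nonneg)
  then show ?thesis
    using pi_CV_eq[OF x] p_pos R_nonneg by simp
qed (simp add: pi_CV_def)

lemma pi_CV_le_trip_time:
  assumes "\<And>i. 0 \<le> bC i"
  shows "pi_CV p c R N b t bC \<le> p * R * trip_time b t bC"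
proof (cases "\<exists>x. CV_optimal p c R N b t bC x")
  case True
  then obtain x where x: "CV_optimal p c R N b t bC x" ..
  then have "trip_time b t (inflow x) \<le> trip_time b t bC"
    by (intro trip_time_mono) (simp add: CV_optimal_def CV_feasible_def)
  then show ?thesis
    using pi_CV_eq[OF x] p_pos R_nonneg by (simp add: mult_left_mono)
next
  case False
  have "0 \<le> trip_time b t bC"
    using assms by (rule trip_time_nonneg)
  then show ?thesis
    using False p_pos R_nonneg by (simp add: pi_CV_def)
qed

lemma driving_time_pos_if_CV_revenue_pos:
  assumes "nonneg x" "0 < wsum (rC p c R b t) x"
  shows "0 < wsum (tau_dr b t) x"
proof -
  have "0 \<le> wsum t x"
    using assms(1) t_nonneg unfolding wsum_def nonneg_def by (simp add: sum_nonneg)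
  then have "trip_time b t (inflow x) \<le> wsum (tau_dr b t) x"
    unfolding wsum_tau_dr by simp
  moreover have "0 < trip_time b t (inflow x)"
  proof (rule ccontr)
    assume "\<not> 0 < trip_time b t (inflow x)"
    then have "trip_time b t (inflow x) = 0"
      using trip_time_nonneg inflow_nonneg[OF assms(1)] by (simp add: order.antisym)
    then show False
      using assms(2) \<open>0 \<le> wsum t x\<close> mult_nonneg_nonneg[OF c_nonneg \<open>0 \<le> wsum t x\<close>]
      unfolding wsum_rC wsum_tau_dr by simp
  qed
  ultimately show ?thesis
    by simp
qed

lemma CV_revenue_le_if_more_driving:
  assumes "wsum (rA p c b t) y \<le> wsum (rA p c b t) xh"
    and "wsum (tau_dr b t) xh \<le> wsum (tau_dr b t) y"
  shows "wsum (rC p c R b t) y \<le> wsum (rC p c R b t) xh"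
proof (cases "trip_time b t (inflow xh) \<le> trip_time b t (inflow y)")
  case True
  then have "p * R * trip_time b t (inflow xh) \<le> p * R * trip_time b t (inflow y)"
    using p_pos R_nonneg by (simp add: mult_left_mono)
  then show ?thesis
    using assms(1) unfolding wsum_rA_eq_rC_plus_rC2P[where R = R] wsum_rC2P by simp
next
  case False
  then have "p * (1 - R) * trip_time b t (inflow y) \<le> p * (1 - R) * trip_time b t (inflow xh)"
    using p_pos R_lt1 by (simp add: mult_left_mono)
  moreover have "c * wsum (tau_dr b t) xh \<le> c * wsum (tau_dr b t) y"
    using assms(2) c_nonneg by (simp add: mult_left_mono)
  ultimately show ?thesis
    unfolding wsum_rC by simp
qed

lemma CV_revenue_le_if_less_driving:
  assumes xh: "AV_first p c M b t xh"
    and xc: "CV_feasible b (\<lambda>i. demand b i - inflow xh i) xc" "0 < wsum (rC p c R b t) xc"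
    and y: "CV_feasible b (demand b) y" "wsum (tau_dr b t) y < wsum (tau_dr b t) xh"
  shows "wsum (rC p c R b t) y \<le> wsum (rC p c R b t) xh"
proof -
  let ?T = "wsum (tau_dr b t)" and ?A = "\<lambda>x. trip_time b t (inflow x)"
  define w where "w = (\<lambda>i j. 1 * xh i j + 1 * xc i j)"
  define D where "D = ?T xh - ?T y"
  have D_pos: "0 < D"
    using y(2) by (simp add: D_def)
  have "CV_feasible b (\<lambda>i. 1 * inflow xh i + 1 * (demand b i - inflow xh i)) w"
    unfolding w_def using xh xc(1)
    by (intro CV_feasible_lincomb CV_feasible_own_inflow) (auto simp: AV_first_iff CV_feasible_def)
  then have w_feasible: "CV_feasible b (demand b) w"
    by simp
  have T_xc_pos: "0 < ?T xc"
    using xc by (intro driving_time_pos_if_CV_revenue_pos) (auto simp: CV_feasible_def)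
  have "?T w = ?T xh + ?T xc" "?A w = ?A xh + ?A xc"
    unfolding w_def wsum_lincomb inflow_lincomb trip_time_def
    by (simp_all add: sum.distrib algebra_simps)
  then have "?T xc * (p * ?A y - c * ?T y) + D * ((p * ?A xh - c * ?T xh) + (p * ?A xc - c * ?T xc))
      \<le> (?T xc + D) * (p * ?A xh - c * ?T xh)"
    using AV_first_above_chord[OF xh y(1) w_feasible] y(2) T_xc_pos
    unfolding wsum_rA D_def by (simp add: algebra_simps)
  then have "p * (?T xc * (?A y - ?A xh) + D * ?A xc) \<le> 0"
    unfolding D_def by (simp add: algebra_simps)
  then have trade_off: "?T xc * (?A y - ?A xh) + D * ?A xc \<le> 0"
    using p_pos by (simp add: mult_le_0_iff)
  have "?T xc * (wsum (rC p c R b t) y - wsum (rC p c R b t) xh)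
      = p * (1 - R) * (?T xc * (?A y - ?A xh) + D * ?A xc) - D * wsum (rC p c R b t) xc"
    unfolding wsum_rC D_def by (simp add: algebra_simps)
  also have "\<dots> < 0"
    using mult_nonneg_nonpos[OF _ trade_off, of "p * (1 - R)"] p_pos R_lt1
      mult_pos_pos[OF D_pos xc(2)] by simp
  finally show ?thesis
    using T_xc_pos by (simp add: mult_less_0_iff)
qed

lemma AV_first_maximizes_CV_revenue:
  assumes xh: "AV_first p c M b t xh"
    and xc: "CV_feasible b (\<lambda>i. demand b i - inflow xh i) xc" "0 < wsum (rC p c R b t) xc"
    and y: "CV_feasible b (demand b) y" "wsum (tau_dr b t) y \<le> M"
  shows "wsum (rC p c R b t) y \<le> wsum (rC p c R b t) xh"
proof (cases "wsum (tau_dr b t) xh \<le> wsum (tau_dr b t) y")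
  case True
  have "wsum (rA p c b t) y \<le> wsum (rA p c b t) xh"
    using xh y by (simp add: AV_first_iff)
  then show ?thesis
    using True by (rule CV_revenue_le_if_more_driving)
next
  case False
  then show ?thesis
    using CV_revenue_le_if_less_driving[OF xh xc y(1)] by simp
qed

lemma OPT_obj_le_if_residual_served:
  assumes xh: "AV_first p c M b t xh"
    and xc: "CV_optimal p c R N b t (\<lambda>i. demand b i - inflow xh i) xc"
      "\<And>i. inflow xc i = demand b i - inflow xh i"
    and feas: "OPT_feasible M b t bC xA"
  shows "OPT_obj p c R N b t bC xA
           \<le> wsum (rA p c b t) xh + pi_CV p c R N b t (\<lambda>i. demand b i - inflow xh i)"
proof -
  let ?A = "\<lambda>x. trip_time b t (inflow x)"
  have bC: "\<And>i. 0 \<le> bC i" and xA: "CV_feasible b (\<lambda>i. demand b i - bC i) xA"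
    and budget: "wsum (tau_dr b t) xA \<le> M"
    using feas by (simp_all add: OPT_feasible_iff)
  have "trip_time b t bC \<le> trip_time b t (\<lambda>i. demand b i - inflow xA i)"
    using xA by (intro trip_time_mono) (simp add: CV_feasible_def le_diff_eq add.commute)
  then have "p * R * trip_time b t bC \<le> p * R * (trip_time b t (demand b) - ?A xA)"
    using p_pos R_nonneg unfolding trip_time_diff by (simp add: mult_left_mono)
  then have pi_bC: "pi_CV p c R N b t bC \<le> p * R * (trip_time b t (demand b) - ?A xA)"
    using pi_CV_le_trip_time[of bC, OF bC] by linarith
  have "inflow xc = (\<lambda>i. demand b i - inflow xh i)"
    using xc(2) by auto
  then have pi_residual:
    "pi_CV p c R N b t (\<lambda>i. demand b i - inflow xh i) = p * R * (trip_time b t (demand b) - ?A xh)"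
    using pi_CV_eq[OF xc(1)] by (simp add: trip_time_diff)
  have "wsum (rC p c R b t) xA \<le> wsum (rC p c R b t) xh"
    using xc(1) budget OPT_feasible_imp_demand_feasible[OF feas]
    by (intro AV_first_maximizes_CV_revenue[OF xh, of xc]) (simp_all add: CV_optimal_def)
  then show ?thesis
    using pi_bC pi_residual
    unfolding OPT_obj_def wsum_rA_eq_rC_plus_rC2P[where R = R] wsum_rC2P right_diff_distrib
    by linarith
qed

lemma AV_first_maximizes_without_budget:
  assumes xh: "AV_first p c M b t xh"
    and xs: "CV_feasible b (demand b) xs" "\<And>i. inflow xs i = demand b i" "wsum (tau_dr b t) xs \<le> M"
    and y: "CV_feasible b (demand b) y"
  shows "wsum (rA p c b t) y \<le> wsum (rA p c b t) xh"
proof (cases "wsum (tau_dr b t) y \<le> M")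
  case True
  then show ?thesis
    using xh y by (simp add: AV_first_iff)
next
  case False
  have "trip_time b t (inflow y) \<le> trip_time b t (inflow xs)"
    using y xs(2) by (intro trip_time_mono) (simp add: CV_feasible_def)
  then have "p * trip_time b t (inflow y) \<le> p * trip_time b t (inflow xs)"
    using p_pos by (simp add: mult_left_mono)
  moreover have "c * wsum (tau_dr b t) xs \<le> c * wsum (tau_dr b t) y"
    using False xs(3) c_nonneg by (simp add: mult_left_mono)
  ultimately have "wsum (rA p c b t) y \<le> wsum (rA p c b t) xs"
    unfolding wsum_rA by linarith
  also have "\<dots> \<le> wsum (rA p c b t) xh"
    using xh xs by (simp add: AV_first_iff)
  finally show ?thesis .
qed

lemma OPT_obj_le_if_full_AV_coverage:
  assumes xh: "AV_first p c M b t xh"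
    and xs: "CV_feasible b (demand b) xs" "\<And>i. inflow xs i = demand b i" "wsum (tau_dr b t) xs \<le> M"
    and feas: "OPT_feasible M b t bC xA"
  shows "OPT_obj p c R N b t bC xA \<le> wsum (rA p c b t) xh + pi_CV p c R N b t bC'"
proof (cases "\<exists>x. CV_optimal p c R N b t bC x")
  case True
  then obtain xC where xC: "CV_optimal p c R N b t bC xC" ..
  have xA: "CV_feasible b (\<lambda>i. demand b i - bC i) xA"
    using feas by (simp add: OPT_feasible_iff)
  define z where "z = (\<lambda>i j. 1 * xA i j + 1 * xC i j)"
  have "CV_feasible b (\<lambda>i. 1 * (demand b i - bC i) + 1 * bC i) z"
    unfolding z_def using xA xC by (intro CV_feasible_lincomb) (simp_all add: CV_optimal_def)
  then have "CV_feasible b (demand b) z"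
    by simp
  then have "wsum (rA p c b t) z \<le> wsum (rA p c b t) xh"
    by (rule AV_first_maximizes_without_budget[OF xh xs])
  then have "wsum (rA p c b t) xA + wsum (rA p c b t) xC \<le> wsum (rA p c b t) xh"
    unfolding z_def wsum_lincomb by simp
  moreover have "pi_CV p c R N b t bC < wsum (rA p c b t) xC"
    using xC unfolding pi_CV_eq[OF xC] wsum_rA_eq_rC_plus_rC2P[where R = R] wsum_rC2P
    by (simp add: CV_optimal_def)
  ultimately show ?thesis
    using pi_CV_nonneg[of bC'] by (simp add: OPT_obj_def)
next
  case False
  then have "OPT_obj p c R N b t bC xA = wsum (rA p c b t) xA"
    by (simp add: OPT_obj_def pi_CV_def)
  also have "\<dots> \<le> wsum (rA p c b t) xh"
    using xh feas OPT_feasible_imp_demand_feasible[OF feas] by (simp add: AV_first_iff OPT_feasible_iff)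
  finally show ?thesis
    using pi_CV_nonneg[of bC'] by simp
qed

end

theorem proposition6:
  fixes b t :: "'l::finite \<Rightarrow> 'l \<Rightarrow> real"
    and p c R N M :: real
    and xA_hat :: "'l \<Rightarrow> 'l \<Rightarrow> real"
  assumes b_nonneg: "\<forall>i j. 0 \<le> b i j"
    and b_pos: "\<forall>i. 0 < (\<Sum>j\<in>UNIV. b i j)"
    and t_pos: "\<forall>i j. i \<noteq> j \<longrightarrow> 0 < t i j"
    and t_diag: "\<forall>i. t i i = 0"
    and p_pos: "0 < p" and c_nonneg: "0 \<le> c"
    and R_pos: "0 < R" and R_lt1: "R < 1"
    and N_pos: "0 < N" and M_nonneg: "0 \<le> M"
    and avfirst: "AV_first p c M b t xA_hat"
    and cond: "(\<exists>xC. CV_optimal p c R N b t (\<lambda>i. (\<Sum>j\<in>UNIV. b i j) - inflow xA_hat i) xC \<and>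
                     (\<forall>i. inflow xC i = (\<Sum>j\<in>UNIV. b i j) - inflow xA_hat i))
             \<or> (\<exists>xA. nonneg xA \<and> flow_balance b xA \<and> wsum (tau_dr b t) xA \<le> M \<and>
                     (\<forall>i. inflow xA i = (\<Sum>j\<in>UNIV. b i j)))"
  shows "\<forall>bC xA. OPT_feasible M b t bC xA \<longrightarrow>
           OPT_obj p c R N b t bC xA
             \<le> wsum (rA p c b t) xA_hat + pi_CV p c R N b t (\<lambda>i. (\<Sum>j\<in>UNIV. b i j) - inflow xA_hat i)"
proof (intro allI impI)
  fix bC xA
  assume feas: "OPT_feasible M b t bC xA"
  have "0 \<le> t i j" for i j
    using t_pos t_diag by (cases "i = j") (auto intro: less_imp_le)
  then interpret ride_hailing b t p c R N
    using b_nonneg p_pos c_nonneg R_pos R_lt1 N_pos by unfold_locales auto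
  from cond show "OPT_obj p c R N b t bC xA
      \<le> wsum (rA p c b t) xA_hat + pi_CV p c R N b t (\<lambda>i. (\<Sum>j\<in>UNIV. b i j) - inflow xA_hat i)"
  proof (elim disjE exE conjE)
    fix xC
    assume "CV_optimal p c R N b t (\<lambda>i. (\<Sum>j\<in>UNIV. b i j) - inflow xA_hat i) xC"
      and "\<forall>i. inflow xC i = (\<Sum>j\<in>UNIV. b i j) - inflow xA_hat i"
    then show ?thesis
      using OPT_obj_le_if_residual_served[OF avfirst _ _ feas, unfolded demand_def] by blast
  next
    fix xs
    assume "nonneg xs" "flow_balance b xs" "wsum (tau_dr b t) xs \<le> M"
      and "\<forall>i. inflow xs i = (\<Sum>j\<in>UNIV. b i j)"
    then show ?thesis
      using OPT_obj_le_if_full_AV_coverage[OF avfirst _ _ _ feas, unfolded demand_def]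
      by (simp add: CV_feasible_def)
  qed
qed

end
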